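(* Let $n\ge 1$, $i\in\{1,\ldots,n-1\}$, and let $C$ be a set of transpositions in $S_n$ which is $s_i$-stable, i.e. $s_i\in C$ and $s_iCs_i=C$. Then the divided difference operator $\partial_i$ is defined on all of $H_C$, and $\partial_i(H_C)\subseteq H_C$.
   Context: Let $S_n$ be the symmetric group on $\{1,\ldots,n\}$ with $(vw)(j)=v(w(j))$, and $s_i=(i\leftrightarrow i+1)$. Let $H=\mathrm{Fun}(S_n,\mathbb{C}[t_1,\ldots,t_n])$ be the ring of functions from $S_n$ to the polynomial ring, with pointwise operations. The star action (right action) of $w\in S_n$ on $f\in H$ is $(f*w)(v)=f(vw^{-1})$, extended linearly to $\mathbb{C}[S_n]$ (so $f*(1-\tau)=f-f*\tau$). Let $t_i\in H$ denote the constant function $v\mapsto t_i$ and $x_i\in H$ the function $v\mapsto t_{v(i)}$. For a transposition $\tau=(i\leftrightarrow k)$, an element $f\in H$ satisfies condition $\tau$ if $f-f*\tau=(x_i-x_k)g$ for some $g\in H$; these elements form a subring $H_\tau$, and for a set $C$ of transpositions $H_C=\bigcap_{\tau\in C}H_\tau$ (with $H_\varnothing=H$). For $f\in H_{s_i}$, the divided difference $\partial_i(f)$ is the unique $g\in H$ with $f-f*s_i=(x_i-x_{i+1})g$ (unique since $x_i-x_{i+1}$ is nonzero at every permutation); $\partial_i$ is defined exactly on $H_{s_i}$. *)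

theory Defs
  imports Complex_Main "HOL-Library.Poly_Mapping" "HOL-Combinatorics.Transposition"
          "HOL-Combinatorics.Permutations"
begin

text \<open>Polynomials over the complex numbers in the variables t_1, t_2, ...:
  a monomial is a finitely supported exponent vector exponent vectors,
  a polynomial a finitely supported coefficient function on monomials.\<close>
type_synonym cpoly = "(nat \<Rightarrow>\<^sub>0 nat) \<Rightarrow>\<^sub>0 complex"

definition pvar :: "nat \<Rightarrow> cpoly" where
  "pvar i = Poly_Mapping.single (Poly_Mapping.single i 1) 1"

definition pvars :: "cpoly \<Rightarrow> nat set" where
  "pvars p = \<Union> (Poly_Mapping.keys ` Poly_Mapping.keys p)"

definition Sn :: "nat \<Rightarrow> (nat \<Rightarrow> nat) set" where
  "Sn n = {v. v permutes {1..n}}"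

text \<open>H = Fun(S_n, C[t_1..t_n]); functions are normalised to 0 outside S_n.\<close>
definition Hring :: "nat \<Rightarrow> ((nat \<Rightarrow> nat) \<Rightarrow> cpoly) set" where
  "Hring n = {f. (\<forall>v\<in>Sn n. pvars (f v) \<subseteq> {1..n}) \<and> (\<forall>v. v \<notin> Sn n \<longrightarrow> f v = 0)}"

definition star :: "((nat \<Rightarrow> nat) \<Rightarrow> cpoly) \<Rightarrow> (nat \<Rightarrow> nat) \<Rightarrow> ((nat \<Rightarrow> nat) \<Rightarrow> cpoly)" where
  "star f w = (\<lambda>v. f (v \<circ> inv w))"

definition xfun :: "nat \<Rightarrow> nat \<Rightarrow> (nat \<Rightarrow> nat) \<Rightarrow> cpoly" where
  "xfun n i = (\<lambda>v. if v \<in> Sn n then pvar (v i) else 0)"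

definition Htr :: "nat \<Rightarrow> nat \<Rightarrow> nat \<Rightarrow> ((nat \<Rightarrow> nat) \<Rightarrow> cpoly) set" where
  "Htr n i k = {f \<in> Hring n. \<exists>g\<in>Hring n.
      (\<lambda>v. f v - star f (transpose i k) v) = (\<lambda>v. (xfun n i v - xfun n k v) * g v)}"

definition transpositions :: "nat \<Rightarrow> (nat \<Rightarrow> nat) set" where
  "transpositions n = {transpose i k | i k. i \<in> {1..n} \<and> k \<in> {1..n} \<and> i \<noteq> k}"

definition HC :: "nat \<Rightarrow> (nat \<Rightarrow> nat) set \<Rightarrow> ((nat \<Rightarrow> nat) \<Rightarrow> cpoly) set" where
  "HC n C = {f \<in> Hring n. \<forall>\<tau>\<in>C. \<forall>i k. i \<noteq> k \<and> \<tau> = transpose i k \<longrightarrow> f \<in> Htr n i k}"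

definition s :: "nat \<Rightarrow> nat \<Rightarrow> nat" where
  "s i = transpose i (i + 1)"

definition divdiff :: "nat \<Rightarrow> nat \<Rightarrow> ((nat \<Rightarrow> nat) \<Rightarrow> cpoly) \<Rightarrow> ((nat \<Rightarrow> nat) \<Rightarrow> cpoly)" where
  "divdiff n i f = (\<lambda>v. if v \<in> Sn n then
      (THE q. f v - star f (s i) v = (xfun n i v - xfun n (i + 1) v) * q) else 0)"

end

theory Submission
  imports Defs
begin

(* Let g be the divided difference of f, so that f(v) - f(v s_i) = (t_v(i) - t_v(i+1)) g(v) on S_n.
   Reading this relation at v and at v s_i shows that g is s_i-invariant.  For any other transposition
   tau = (j k) in C, f satisfies the conditions tau and s_i tau s_i; combining the relation at v and at
   v tau then shows that t_v(j) - t_v(k) divides (t_v(i) - t_v(i+1)) (g(v) - g(v tau)), because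
   t_v(tau(x)) - t_v(x) is a multiple of t_v(j) - t_v(k).  Two distinct linear forms t_a - t_b are
   coprime (the substitution t_a := t_b kills one but not the other), so g satisfies condition tau.
   The quotients lie in C[t_1..t_n] since an exact quotient cannot involve variables that occur
   neither in the dividend nor in the divisor. *)

lemma poly_mapping_sum_single:
  "p = (\<Sum>m\<in>Poly_Mapping.keys p. Poly_Mapping.single m (Poly_Mapping.lookup p m))"
proof (rule poly_mapping_eqI)
  fix k
  show "Poly_Mapping.lookup p k =
    Poly_Mapping.lookup (\<Sum>m\<in>Poly_Mapping.keys p. Poly_Mapping.single m (Poly_Mapping.lookup p m)) k"
    by (cases "k \<in> Poly_Mapping.keys p") (auto simp: lookup_sum lookup_single when_def in_keys_iff)
qed

definition map_monomials :: "('a \<Rightarrow> 'c) \<Rightarrow> ('a \<Rightarrow> 'b) \<Rightarrow> ('a \<Rightarrow>\<^sub>0 'b) \<Rightarrow> ('c \<Rightarrow>\<^sub>0 'b::semiring_0)" where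
  "map_monomials \<mu> \<chi> p =
    (\<Sum>m\<in>Poly_Mapping.keys p. Poly_Mapping.single (\<mu> m) (\<chi> m * Poly_Mapping.lookup p m))"

lemma map_monomials_superset:
  assumes "finite S" "Poly_Mapping.keys p \<subseteq> S"
  shows "map_monomials \<mu> \<chi> p = (\<Sum>m\<in>S. Poly_Mapping.single (\<mu> m) (\<chi> m * Poly_Mapping.lookup p m))"
  unfolding map_monomials_def
  by (rule sum.mono_neutral_left[OF assms]) (auto simp: in_keys_iff)

lemma map_monomials_single [simp]:
  "map_monomials \<mu> \<chi> (Poly_Mapping.single m c) = Poly_Mapping.single (\<mu> m) (\<chi> m * c)"
  by (simp add: map_monomials_def)

lemma map_monomials_zero [simp]: "map_monomials \<mu> \<chi> 0 = 0"
  by (simp add: map_monomials_def)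

lemma map_monomials_add:
  "map_monomials \<mu> \<chi> (p + q) = map_monomials \<mu> \<chi> p + map_monomials \<mu> \<chi> q"
proof -
  let ?S = "Poly_Mapping.keys p \<union> Poly_Mapping.keys q"
  have "Poly_Mapping.keys (p + q) \<subseteq> ?S"
    by (rule keys_add)
  then show ?thesis
    by (simp add: map_monomials_superset[of ?S] lookup_add distrib_left single_add sum.distrib)
qed

lemma map_monomials_diff:
  fixes p q :: "'a \<Rightarrow>\<^sub>0 'b::ring"
  shows "map_monomials \<mu> \<chi> (p - q) = map_monomials \<mu> \<chi> p - map_monomials \<mu> \<chi> q"
  using map_monomials_add[of \<mu> \<chi> "p - q" q] by (simp add: eq_diff_eq)

lemma map_monomials_sum:
  "map_monomials \<mu> \<chi> (\<Sum>i\<in>I. F i) = (\<Sum>i\<in>I. map_monomials \<mu> \<chi> (F i))"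
  by (induction I rule: infinite_finite_induct) (auto simp: map_monomials_add)

lemma map_monomials_mult:
  fixes p q :: "'a::monoid_add \<Rightarrow>\<^sub>0 'b::comm_semiring_0"
  assumes "\<And>a b. \<mu> (a + b) = \<mu> a + \<mu> b" and "\<And>a b. \<chi> (a + b) = \<chi> a * \<chi> b"
  shows "map_monomials \<mu> \<chi> (p * q) = map_monomials \<mu> \<chi> p * map_monomials \<mu> \<chi> q"
proof -
  let ?P = "Poly_Mapping.keys p" and ?Q = "Poly_Mapping.keys q"
  have "p * q = (\<Sum>a\<in>?P. Poly_Mapping.single a (Poly_Mapping.lookup p a)) *
      (\<Sum>b\<in>?Q. Poly_Mapping.single b (Poly_Mapping.lookup q b))"
    using poly_mapping_sum_single[of p] poly_mapping_sum_single[of q] by simp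
  also have "\<dots> = (\<Sum>a\<in>?P. \<Sum>b\<in>?Q.
      Poly_Mapping.single (a + b) (Poly_Mapping.lookup p a * Poly_Mapping.lookup q b))"
    by (simp add: sum_product mult_single)
  finally have "map_monomials \<mu> \<chi> (p * q) = (\<Sum>a\<in>?P. \<Sum>b\<in>?Q.
      Poly_Mapping.single (\<mu> a + \<mu> b) (\<chi> a * \<chi> b * (Poly_Mapping.lookup p a * Poly_Mapping.lookup q b)))"
    by (simp add: map_monomials_sum assms)
  then show ?thesis
    by (simp add: map_monomials_def sum_product mult_single algebra_simps)
qed

lemma pvar_inject [simp]: "pvar a = pvar b \<longleftrightarrow> a = b"
  unfolding pvar_def by (metis inj_single injD lookup_single_eq lookup_single_not_eq one_neq_zero)

lemma single_single_one_eq_pvar_power: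
  "Poly_Mapping.single (Poly_Mapping.single a k) 1 = pvar a ^ k"
proof (induction k)
  case (Suc k)
  have "Poly_Mapping.single (Poly_Mapping.single a (Suc k)) (1::complex) =
      Poly_Mapping.single (Poly_Mapping.single a 1 + Poly_Mapping.single a k) (1 * 1)"
    by (simp add: single_add[symmetric])
  also have "\<dots> = Poly_Mapping.single (Poly_Mapping.single a 1) 1 *
      Poly_Mapping.single (Poly_Mapping.single a k) (1::complex)"
    by (simp only: mult_single)
  also have "\<dots> = pvar a * pvar a ^ k"
    unfolding Suc.IH pvar_def ..
  finally show ?case by simp
qed simp

definition move_exponent :: "nat \<Rightarrow> nat \<Rightarrow> (nat \<Rightarrow>\<^sub>0 nat) \<Rightarrow> (nat \<Rightarrow>\<^sub>0 nat)" where
  "move_exponent a b m = Poly_Mapping.update a 0 m + Poly_Mapping.single b (Poly_Mapping.lookup m a)"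

lemma move_exponent_add: "move_exponent a b (m + m') = move_exponent a b m + move_exponent a b m'"
  by (rule poly_mapping_eqI) (simp add: move_exponent_def lookup_add lookup_update lookup_single when_def)

definition subst_pvar :: "nat \<Rightarrow> nat \<Rightarrow> cpoly \<Rightarrow> cpoly" where
  "subst_pvar a b = map_monomials (move_exponent a b) (\<lambda>_. 1)"

lemma subst_pvar_diff: "subst_pvar a b (p - q) = subst_pvar a b p - subst_pvar a b q"
  by (simp add: subst_pvar_def map_monomials_diff)

lemma subst_pvar_mult: "subst_pvar a b (p * q) = subst_pvar a b p * subst_pvar a b q"
  unfolding subst_pvar_def by (rule map_monomials_mult) (simp_all add: move_exponent_add)

lemma subst_pvar_pvar: "subst_pvar a b (pvar c) = pvar (if c = a then b else c)"
proof -
  have "move_exponent a b (Poly_Mapping.single c 1) = Poly_Mapping.single (if c = a then b else c) 1"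
    by (rule poly_mapping_eqI)
       (auto simp: move_exponent_def lookup_add lookup_update lookup_single when_def)
  then show ?thesis
    by (simp add: subst_pvar_def pvar_def)
qed

lemma pvar_diff_dvd_single_diff_subst:
  "(pvar a - pvar b) dvd (Poly_Mapping.single m c - subst_pvar a b (Poly_Mapping.single m c))"
proof -
  let ?r = "Poly_Mapping.single 0 c * Poly_Mapping.single (Poly_Mapping.update a 0 m) 1"
    and ?k = "Poly_Mapping.lookup m a"
  have "m = Poly_Mapping.update a 0 m + Poly_Mapping.single a ?k"
    by (rule poly_mapping_eqI) (auto simp: lookup_add lookup_update lookup_single when_def)
  then have "Poly_Mapping.single m c = ?r * pvar a ^ ?k"
    by (metis mult_single add_0 mult.right_neutral single_single_one_eq_pvar_power)
  moreover have "subst_pvar a b (Poly_Mapping.single m c) = ?r * pvar b ^ ?k"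
    by (simp add: subst_pvar_def move_exponent_def mult_single single_single_one_eq_pvar_power[symmetric])
  moreover have "(pvar a - pvar b) dvd (pvar a ^ ?k - pvar b ^ ?k)"
    by (simp add: power_diff_sumr2)
  ultimately show ?thesis
    by (simp add: right_diff_distrib[symmetric])
qed

lemma pvar_diff_dvd_diff_subst: "(pvar a - pvar b) dvd (p - subst_pvar a b p)"
proof -
  have "subst_pvar a b p =
      (\<Sum>m\<in>Poly_Mapping.keys p. subst_pvar a b (Poly_Mapping.single m (Poly_Mapping.lookup p m)))"
    unfolding subst_pvar_def map_monomials_single by (simp add: map_monomials_def)
  then have "p - subst_pvar a b p = (\<Sum>m\<in>Poly_Mapping.keys p. Poly_Mapping.single m (Poly_Mapping.lookup p m)
      - subst_pvar a b (Poly_Mapping.single m (Poly_Mapping.lookup p m)))"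
    by (subst (1) poly_mapping_sum_single[of p]) (simp add: sum_subtractf)
  also have "(pvar a - pvar b) dvd \<dots>"
    by (rule dvd_sum) (rule pvar_diff_dvd_single_diff_subst)
  finally show ?thesis .
qed

lemma pvar_diff_dvd_mult_cancel:
  assumes "a \<noteq> b" "c \<noteq> d" "{c, d} \<noteq> {a, b}"
    and "(pvar a - pvar b) dvd ((pvar c - pvar d) * p)"
  shows "(pvar a - pvar b) dvd p"
proof -
  from assms(4) obtain q where q: "(pvar c - pvar d) * p = (pvar a - pvar b) * q"
    by (elim dvdE)
  have "subst_pvar a b (pvar a - pvar b) = 0"
    by (simp add: subst_pvar_diff subst_pvar_pvar)
  with arg_cong[OF q, of "subst_pvar a b"]
  have "(pvar (if c = a then b else c) - pvar (if d = a then b else d)) * subst_pvar a b p = 0"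
    by (simp add: subst_pvar_mult subst_pvar_diff subst_pvar_pvar)
  moreover have "pvar (if c = a then b else c) \<noteq> pvar (if d = a then b else d)"
    using assms(1-3) by auto
  ultimately have "subst_pvar a b p = 0"
    by simp
  then show ?thesis
    using pvar_diff_dvd_diff_subst[of a b p] by simp
qed

definition restrict_pvars :: "nat set \<Rightarrow> cpoly \<Rightarrow> cpoly" where
  "restrict_pvars X = map_monomials id (\<lambda>m. if Poly_Mapping.keys m \<subseteq> X then 1 else 0)"

lemma restrict_pvars_mult:
  "restrict_pvars X (p * q) = restrict_pvars X p * restrict_pvars X q"
proof -
  have "Poly_Mapping.keys (m + m') = Poly_Mapping.keys m \<union> Poly_Mapping.keys m'" for m m' :: "nat \<Rightarrow>\<^sub>0 nat"
    by (auto simp: in_keys_iff lookup_add)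
  then show ?thesis
    unfolding restrict_pvars_def by (intro map_monomials_mult) auto
qed

lemma restrict_pvars_id: "pvars p \<subseteq> X \<Longrightarrow> restrict_pvars X p = p"
  unfolding restrict_pvars_def map_monomials_def
  by (subst (2) poly_mapping_sum_single[of p], rule sum.cong) (auto simp: pvars_def)

lemma pvars_restrict_pvars: "pvars (restrict_pvars X p) \<subseteq> X"
proof -
  have "Poly_Mapping.keys (restrict_pvars X p) \<subseteq> {m. Poly_Mapping.keys m \<subseteq> X}"
    unfolding restrict_pvars_def map_monomials_def
    by (rule order.trans[OF keys_sum]) auto
  then show ?thesis
    unfolding pvars_def by blast
qed

lemma pvars_quotient:
  assumes "p = q * h" "q \<noteq> 0" "pvars p \<subseteq> X" "pvars q \<subseteq> X"
  shows "pvars h \<subseteq> X"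
proof -
  have "q * restrict_pvars X h = q * h"
    using assms by (metis restrict_pvars_id restrict_pvars_mult)
  with assms(2) have "restrict_pvars X h = h"
    by simp
  then show ?thesis
    by (metis pvars_restrict_pvars)
qed

lemma pvars_diff: "pvars (p - q) \<subseteq> pvars p \<union> pvars q"
  unfolding pvars_def using keys_diff[of p q] by blast

lemma pvars_pvar: "pvars (pvar a) = {a}"
  by (simp add: pvars_def pvar_def)

lemma Sn_inj: "v \<in> Sn n \<Longrightarrow> inj v"
  by (auto simp: Sn_def intro: permutes_inj)

lemma Sn_compose_iff: "t permutes {1..n} \<Longrightarrow> v \<circ> t \<in> Sn n \<longleftrightarrow> v \<in> Sn n"
proof
  assume t: "t permutes {1..n}" and "v \<circ> t \<in> Sn n"
  then have "v \<circ> t \<circ> inv t \<in> Sn n"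
    by (simp add: Sn_def permutes_compose permutes_inv)
  moreover have "v \<circ> t \<circ> inv t = v"
    using permutes_inv_o(1)[OF t] by (simp add: o_assoc[symmetric])
  ultimately show "v \<in> Sn n"
    by simp
qed (simp add: Sn_def permutes_compose)

lemma transpositions_support:
  assumes "transpose j k \<in> transpositions n" "j \<noteq> k"
  shows "j \<in> {1..n}" "k \<in> {1..n}"
proof -
  have "transpose j k permutes {1..n}"
    using assms(1) by (auto simp: transpositions_def permutes_swap_id)
  then show "j \<in> {1..n}" "k \<in> {1..n}"
    using permutes_not_in[of "transpose j k" "{1..n}"] assms(2) by force+
qed

lemma pvar_diff_nonzero: "inj v \<Longrightarrow> j \<noteq> k \<Longrightarrow> pvar (v j) - pvar (v k) \<noteq> 0"
  by (auto dest: injD)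

lemma Htr_imp_Hring: "f \<in> Htr n j k \<Longrightarrow> f \<in> Hring n"
  by (simp add: Htr_def)

lemma Htr_iff_dvd:
  assumes "f \<in> Hring n" "j \<in> {1..n}" "k \<in> {1..n}" "j \<noteq> k"
  shows "f \<in> Htr n j k \<longleftrightarrow>
    (\<forall>v\<in>Sn n. (pvar (v j) - pvar (v k)) dvd (f v - f (v \<circ> transpose j k)))"
    (is "_ \<longleftrightarrow> (\<forall>v\<in>Sn n. ?D v dvd ?\<delta> v)")
proof
  assume "f \<in> Htr n j k"
  then obtain g where "\<And>v. f v - star f (transpose j k) v = (xfun n j v - xfun n k v) * g v"
    by (auto simp: Htr_def fun_eq_iff)
  then have "?\<delta> v = ?D v * g v" if "v \<in> Sn n" for v
    using that by (simp add: star_def xfun_def)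
  then show "\<forall>v\<in>Sn n. ?D v dvd ?\<delta> v"
    by simp
next
  assume dvd: "\<forall>v\<in>Sn n. ?D v dvd ?\<delta> v"
  have tp: "transpose j k permutes {1..n}"
    using assms(2,3) by (rule permutes_swap_id)
  define h where "h v = (if v \<in> Sn n then SOME h. ?\<delta> v = ?D v * h else 0)" for v
  have h: "?\<delta> v = ?D v * h v" if "v \<in> Sn n" for v
    using dvd that someI_ex[of "\<lambda>h. ?\<delta> v = ?D v * h"] by (auto simp: h_def elim: dvdE)
  have "pvars (h v) \<subseteq> {1..n}" if v: "v \<in> Sn n" for v
  proof (rule pvars_quotient[OF h[OF v]])
    show "?D v \<noteq> 0"
      using Sn_inj[OF v] assms(4) by (rule pvar_diff_nonzero)
    have "v j \<in> {1..n}" "v k \<in> {1..n}"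
      using v assms(2,3) unfolding Sn_def by (simp_all only: mem_Collect_eq permutes_in_image)
    then show "pvars (?D v) \<subseteq> {1..n}"
      using pvars_diff[of "pvar (v j)" "pvar (v k)"] by (auto simp: pvars_pvar)
    have "v \<circ> transpose j k \<in> Sn n"
      using v Sn_compose_iff[OF tp] by simp
    then show "pvars (?\<delta> v) \<subseteq> {1..n}"
      using v assms(1) pvars_diff[of "f v"] by (fastforce simp: Hring_def)
  qed
  then have "h \<in> Hring n"
    by (simp add: Hring_def h_def)
  moreover have "f v - star f (transpose j k) v = (xfun n j v - xfun n k v) * h v" for v
    using h assms(1) Sn_compose_iff[OF tp, of v] by (cases "v \<in> Sn n") (auto simp: star_def xfun_def Hring_def)
  ultimately show "f \<in> Htr n j k"
    using assms(1) by (auto simp: Htr_def)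
qed

lemma dvd_mult_diff_quotients:
  fixes D :: "'a::comm_ring_1"
  assumes "x - x' = L * y" "z - z' = M * w" "D dvd x - z" "D dvd x' - z'" "D dvd M - L"
  shows "D dvd L * (y - w)"
proof -
  have "L * (y - w) = (x - x') - (z - z') + (M - L) * w"
    by (simp add: assms(1,2) algebra_simps)
  also have "\<dots> = (x - z) - (x' - z') + (M - L) * w"
    by (simp add: algebra_simps)
  finally show ?thesis
    using assms(3-5) by (simp add: dvd_add dvd_diff)
qed

lemma pvar_transpose_diff_dvd:
  "(pvar (v j) - pvar (v k)) dvd (pvar (v (transpose j k x)) - pvar (v x))"
proof -
  consider "x = j" | "x = k" | "x \<noteq> j" "x \<noteq> k"
    by blast
  then show ?thesis
  proof cases
    case 1
    have "pvar (v k) - pvar (v j) = - (pvar (v j) - pvar (v k))"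
      by simp
    with 1 show ?thesis
      by (simp only: dvd_minus_iff transpose_apply_first dvd_refl)
  qed simp_all
qed

lemma divdiff_eqI:
  assumes "g \<in> Hring n"
    and "\<And>v. v \<in> Sn n \<Longrightarrow> f v - f (v \<circ> s i) = (pvar (v i) - pvar (v (i + 1))) * g v"
  shows "divdiff n i f = g"
proof
  fix v
  show "divdiff n i f v = g v"
  proof (cases "v \<in> Sn n")
    case True
    have "pvar (v i) - pvar (v (i + 1)) \<noteq> 0"
      using Sn_inj[OF True] by (rule pvar_diff_nonzero) simp
    then have "(THE q. f v - f (v \<circ> s i) = (pvar (v i) - pvar (v (i + 1))) * q) = g v"
      using assms(2)[OF True] by (intro the_equality) auto
    with True show ?thesis
      by (simp add: divdiff_def star_def xfun_def s_def)
  next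
    case False
    with assms(1) show ?thesis
      by (simp add: divdiff_def Hring_def)
  qed
qed

lemma Htr_divdiff:
  assumes "f \<in> Htr n i (i + 1)"
  shows "divdiff n i f \<in> Hring n"
    and "\<And>v. v \<in> Sn n \<Longrightarrow> f v - f (v \<circ> s i) = (pvar (v i) - pvar (v (i + 1))) * divdiff n i f v"
proof -
  from assms obtain g where g: "g \<in> Hring n"
    and "\<And>v. f v - star f (s i) v = (xfun n i v - xfun n (i + 1) v) * g v"
    by (auto simp: Htr_def fun_eq_iff s_def)
  then have E: "f v - f (v \<circ> s i) = (pvar (v i) - pvar (v (i + 1))) * g v" if "v \<in> Sn n" for v
    using that by (simp add: star_def xfun_def s_def)
  have "divdiff n i f = g"
    using g E by (rule divdiff_eqI)
  with g E show "divdiff n i f \<in> Hring n"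
    and "\<And>v. v \<in> Sn n \<Longrightarrow> f v - f (v \<circ> s i) = (pvar (v i) - pvar (v (i + 1))) * divdiff n i f v"
    by simp_all
qed

lemma s_permutes: "i \<in> {1..n} \<Longrightarrow> i + 1 \<in> {1..n} \<Longrightarrow> s i permutes {1..n}"
  unfolding s_def by (rule permutes_swap_id)

lemma divdiff_comp_s:
  assumes "f \<in> Htr n i (i + 1)" "i \<in> {1..n}" "i + 1 \<in> {1..n}" "v \<in> Sn n"
  shows "divdiff n i f (v \<circ> s i) = divdiff n i f v"
proof -
  let ?g = "divdiff n i f" and ?L = "pvar (v i) - pvar (v (i + 1))"
  have "v \<circ> s i \<in> Sn n"
    using assms(4) Sn_compose_iff[OF s_permutes[OF assms(2,3)]] by simp
  from Htr_divdiff(2)[OF assms(1) this]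
  have "f (v \<circ> s i) - f v = - ?L * ?g (v \<circ> s i)"
    by (simp add: s_def o_assoc[symmetric])
  then have "?L * ?g (v \<circ> s i) = - (f (v \<circ> s i) - f v)"
    by (simp add: algebra_simps)
  also have "\<dots> = f v - f (v \<circ> s i)"
    by simp
  also have "\<dots> = ?L * ?g v"
    by (rule Htr_divdiff(2)[OF assms(1,4)])
  finally have "?L * ?g (v \<circ> s i) = ?L * ?g v" .
  moreover have "?L \<noteq> 0"
    using Sn_inj[OF assms(4)] by (rule pvar_diff_nonzero) simp
  ultimately show ?thesis
    by simp
qed

lemma s_conj_transpose: "s i \<circ> transpose j k \<circ> s i = transpose (s i j) (s i k)"
  by (auto simp: s_def fun_eq_iff transpose_def)

lemma s_comp_s_cancel: "s i \<circ> (s i \<circ> f) = f"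
  by (simp add: s_def fun_eq_iff)

lemma s_eq_iff [simp]: "s i j = s i k \<longleftrightarrow> j = k"
  by (auto simp: s_def dest: transpose_eq_imp_eq)

lemma Htr_s_conj_dvd:
  assumes "f \<in> Htr n (s i j) (s i k)" "v \<in> Sn n"
    and "i \<in> {1..n}" "i + 1 \<in> {1..n}" "j \<in> {1..n}" "k \<in> {1..n}" "j \<noteq> k"
  shows "(pvar (v j) - pvar (v k)) dvd (f (v \<circ> s i) - f (v \<circ> transpose j k \<circ> s i))"
proof -
  have si: "s i permutes {1..n}"
    using assms(3,4) by (rule s_permutes)
  have "s i j \<in> {1..n}" "s i k \<in> {1..n}" "s i j \<noteq> s i k"
    using assms(5-7) permutes_in_image[OF si] by simp_all
  with assms(1) have "\<forall>w\<in>Sn n. (pvar (w (s i j)) - pvar (w (s i k))) dvd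
      (f w - f (w \<circ> transpose (s i j) (s i k)))"
    using Htr_iff_dvd[OF Htr_imp_Hring[OF assms(1)]] by blast
  moreover have "v \<circ> s i \<in> Sn n"
    using assms(2) Sn_compose_iff[OF si] by simp
  ultimately have "(pvar ((v \<circ> s i) (s i j)) - pvar ((v \<circ> s i) (s i k))) dvd
      (f (v \<circ> s i) - f (v \<circ> s i \<circ> transpose (s i j) (s i k)))"
    by (rule bspec)
  moreover have "(v \<circ> s i) (s i x) = v x" for x
    by (simp add: s_def)
  moreover have "v \<circ> s i \<circ> transpose (s i j) (s i k) = v \<circ> transpose j k \<circ> s i"
    by (simp add: s_conj_transpose[symmetric] comp_assoc s_comp_s_cancel)
  ultimately show ?thesis
    by simp
qed

lemma divdiff_transpose_dvd:
  assumes f: "f \<in> Htr n i (i + 1)" "f \<in> Htr n j k" "f \<in> Htr n (s i j) (s i k)" and v: "v \<in> Sn n"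
    and i: "i \<in> {1..n}" "i + 1 \<in> {1..n}" and jk: "j \<in> {1..n}" "k \<in> {1..n}" "j \<noteq> k"
    and "{j, k} \<noteq> {i, i + 1}"
  shows "(pvar (v j) - pvar (v k)) dvd (divdiff n i f v - divdiff n i f (v \<circ> transpose j k))"
proof -
  let ?\<tau> = "transpose j k" and ?L = "\<lambda>v. pvar (v i) - pvar (v (i + 1))"
  have v\<tau>: "v \<circ> ?\<tau> \<in> Sn n"
    using v Sn_compose_iff[OF permutes_swap_id[OF jk(1,2)]] by simp
  have "(pvar (v j) - pvar (v k)) dvd f v - f (v \<circ> ?\<tau>)"
    using f(2) v Htr_iff_dvd[OF Htr_imp_Hring[OF f(2)] jk] by blast
  moreover have "(pvar (v j) - pvar (v k)) dvd f (v \<circ> s i) - f (v \<circ> ?\<tau> \<circ> s i)"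
    using f(3) v i jk by (rule Htr_s_conj_dvd)
  moreover have "(pvar (v j) - pvar (v k)) dvd ?L (v \<circ> ?\<tau>) - ?L v"
    using dvd_diff[OF pvar_transpose_diff_dvd[of v j k i] pvar_transpose_diff_dvd[of v j k "i + 1"]]
    by (simp add: algebra_simps)
  ultimately have dvd: "(pvar (v j) - pvar (v k)) dvd
      ?L v * (divdiff n i f v - divdiff n i f (v \<circ> ?\<tau>))"
    by (rule dvd_mult_diff_quotients[OF Htr_divdiff(2)[OF f(1) v] Htr_divdiff(2)[OF f(1) v\<tau>]])
  have "inj v"
    using v by (rule Sn_inj)
  then have "v j \<noteq> v k" "v i \<noteq> v (i + 1)" "{v i, v (i + 1)} \<noteq> {v j, v k}"
    using jk(3) assms(10) inj_image_eq_iff[of v "{i, i + 1}" "{j, k}"] by (auto simp: inj_eq)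
  then show ?thesis
    using dvd by (rule pvar_diff_dvd_mult_cancel)
qed

lemma divdiff_in_Htr:
  assumes f: "f \<in> Htr n i (i + 1)" "f \<in> Htr n j k" "f \<in> Htr n (s i j) (s i k)"
    and i: "i \<in> {1..n}" "i + 1 \<in> {1..n}" and jk: "j \<in> {1..n}" "k \<in> {1..n}" "j \<noteq> k"
  shows "divdiff n i f \<in> Htr n j k"
proof -
  have "(pvar (v j) - pvar (v k)) dvd (divdiff n i f v - divdiff n i f (v \<circ> transpose j k))"
    if v: "v \<in> Sn n" for v
  proof (cases "{j, k} = {i, i + 1}")
    case True
    then have "transpose j k = s i"
      by (auto simp: doubleton_eq_iff s_def transpose_commute)
    then show ?thesis
      using divdiff_comp_s[OF f(1) i v] by simp
  next
    case False
    with f v i jk show ?thesis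
      by (rule divdiff_transpose_dvd)
  qed
  then show ?thesis
    using Htr_iff_dvd[OF Htr_divdiff(1)[OF f(1)] jk] by blast
qed

theorem lemma2:
  fixes n i :: nat and C :: "(nat \<Rightarrow> nat) set"
  assumes "n \<ge> 1" and "1 \<le> i" and "i \<le> n - 1"
    and "C \<subseteq> transpositions n"
    and "s i \<in> C" and "(\<lambda>\<tau>. s i \<circ> \<tau> \<circ> s i) ` C = C"
  shows "HC n C \<subseteq> Htr n i (i + 1) \<and> divdiff n i ` HC n C \<subseteq> HC n C"
proof -
  have i: "i \<in> {1..n}" "i + 1 \<in> {1..n}"
    using assms(2,3) by auto
  have HC_Htr: "HC n C \<subseteq> Htr n i (i + 1)"
    using assms(5) by (auto simp: HC_def s_def)
  have "divdiff n i f \<in> HC n C" if f: "f \<in> HC n C" for f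
    unfolding HC_def
  proof (intro CollectI conjI ballI allI impI)
    show "divdiff n i f \<in> Hring n"
      using f HC_Htr by (blast intro: Htr_divdiff(1))
    fix \<tau> j k
    assume \<tau>: "\<tau> \<in> C" and jk: "j \<noteq> k \<and> \<tau> = transpose j k"
    then have jk_range: "j \<in> {1..n}" "k \<in> {1..n}"
      using assms(4) transpositions_support by blast+
    have "s i \<circ> \<tau> \<circ> s i \<in> C"
      using assms(6) \<tau> by blast
    then have "transpose (s i j) (s i k) \<in> C" "s i j \<noteq> s i k"
      using jk by (simp_all add: s_conj_transpose)
    then have "f \<in> Htr n (s i j) (s i k)"
      using f by (simp add: HC_def)
    then show "divdiff n i f \<in> Htr n j k"
      using f HC_Htr \<tau> jk jk_range i by (intro divdiff_in_Htr) (auto simp: HC_def)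
  qed
  with HC_Htr show ?thesis
    by blast
qed

end
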